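(* Let $k\ge2$ be an integer and $n\in\mathbb Z$, and suppose that $H=(L_k^{(0)})^2$ is invertible (over $\mathbb Q$). Then $L_k^{(n)}$ is invertible and its inverse is $L_k^{(-n)}H^{-1}$.
   Context: Fix an integer $k\ge2$. Let $Q_k$ be the $k\times k$ matrix whose first row is all ones, with $(Q_k)_{i+1,i}=1$ for $1\le i\le k-1$ and all other entries $0$, and for $r\in\mathbb Z$ let $Q_k^r$ denote its $r$-th power. The generalized Lucas sequence of order $k$, $(l_{k,n})_{n\in\mathbb Z}$, is the two-sided sequence satisfying $l_{k,n+k}=l_{k,n+k-1}+\dots+l_{k,n}$ for all $n\in\mathbb Z$ with initial values $l_{k,r}=\operatorname{trace}(Q_k^r)$ for $0\le r\le k-1$ (so $l_{k,0}=k$ and $l_{k,r}=2^r-1$ for $1\le r\le k-1$). For $n\in\mathbb Z$ the generalized Lucas matrix $L_k^{(n)}$ is the $k\times k$ matrix with entries $(L_k^{(n)})_{i,1}=l_{k,k+n-i}$ and $(L_k^{(n)})_{i,j}=\sum_{m=n-i+j-1}^{k+n-i-1} l_{k,m}$ for $2\le j\le k$, $1\le i\le k$. *)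

theory Defs
  imports "Jordan_Normal_Form.Matrix"
begin

definition mtrace :: "'a::comm_ring_1 mat \<Rightarrow> 'a" where
  "mtrace A = (\<Sum>i<dim_row A. A $$ (i, i))"

definition Qk :: "nat \<Rightarrow> rat mat" where
  "Qk k = mat k k (\<lambda>(i, j). if i = 0 then 1 else if i = j + 1 then 1 else 0)"

definition lucas :: "nat \<Rightarrow> int \<Rightarrow> rat" where
  "lucas k = (THE f. (\<forall>n::int. f (n + int k) = (\<Sum>i<k. f (n + int i))) \<and>
                     (\<forall>r<k. f (int r) = mtrace (Qk k ^\<^sub>m r)))"

(* generalized Lucas matrix L_k^(n); paper's 1-based (i,j) is (i+1,j+1) here *)
definition lucas_mat :: "nat \<Rightarrow> int \<Rightarrow> rat mat" where
  "lucas_mat k n = mat k k (\<lambda>(i, j).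
     let i' = int i + 1; j' = int j + 1 in
     if j' = 1 then lucas k (int k + n - i')
     else (\<Sum>m\<in>{n - i' + j' - 1 .. int k + n - i' - 1}. lucas k m))"

end

theory Submission
  imports Defs "Jordan_Normal_Form.Determinant"
begin

(* The recurrence l(n+k) = l(n) + ... + l(n+k-1) can be run backwards because the coefficient
   of l(n) is 1, so the two-sided Lucas sequence is well defined. Read as functions of n - i, the
   columns of L_k^(n) are sums of shifts of it and so satisfy the same recurrence; this gives
   Q_k L_k^(n) = L_k^(n+1) = L_k^(n) Q_k. Hence L_k^(a+1) L_k^(b) = L_k^(a) L_k^(b+1), the product
   L_k^(a) L_k^(b) depends only on a + b, and L_k^(n) L_k^(-n) = (L_k^(0))^2 = H. Over a field a
   one-sided inverse of a square matrix is two-sided, which finishes the proof. *)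

definition kbonacci :: "nat \<Rightarrow> (int \<Rightarrow> 'a::comm_monoid_add) \<Rightarrow> bool" where
  "kbonacci k f \<longleftrightarrow> (\<forall>n. f (n + int k) = (\<Sum>i<k. f (n + int i)))"

lemma kbonacci_shift:
  assumes "kbonacci k f"
  shows "kbonacci k (\<lambda>t. f (t + c))"
  unfolding kbonacci_def
proof
  fix n
  have "f (n + c + int k) = (\<Sum>i<k. f (n + c + int i))"
    using assms unfolding kbonacci_def by blast
  then show "f (n + int k + c) = (\<Sum>i<k. f (n + int i + c))"
    by (simp add: ac_simps)
qed

lemma kbonacci_sum:
  assumes "\<And>j. j \<in> A \<Longrightarrow> kbonacci k (f j)"
  shows "kbonacci k (\<lambda>t. \<Sum>j\<in>A. f j t)"
  unfolding kbonacci_def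
proof
  fix n
  have "(\<Sum>j\<in>A. f j (n + int k)) = (\<Sum>j\<in>A. \<Sum>i<k. f j (n + int i))"
    using assms unfolding kbonacci_def by simp
  also have "\<dots> = (\<Sum>i<k. \<Sum>j\<in>A. f j (n + int i))"
    by (rule sum.swap)
  finally show "(\<Sum>j\<in>A. f j (n + int k)) = (\<Sum>i<k. \<Sum>j\<in>A. f j (n + int i))" .
qed

lemma kbonacci_diff:
  fixes f g :: "int \<Rightarrow> 'a::ab_group_add"
  assumes "kbonacci k f" and "kbonacci k g"
  shows "kbonacci k (\<lambda>t. f t - g t)"
  using assms unfolding kbonacci_def by (simp add: sum_subtractf)

lemma kbonacci_succ_eq_sum_prev:
  assumes "kbonacci k f"
  shows "f (n + 1) = (\<Sum>r<k. f (n - int r))"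
proof -
  have "(\<Sum>r<k. f (n - int r)) = (\<Sum>r<k. f (n + 1 - int k + int (k - Suc r)))"
    by (intro sum.cong) (auto simp: of_nat_diff)
  also have "\<dots> = (\<Sum>r<k. f (n + 1 - int k + int r))"
    by (rule sum.nat_diff_reindex)
  also have "\<dots> = f (n + 1)"
    using assms unfolding kbonacci_def by (metis diff_add_cancel)
  finally show ?thesis by simp
qed

lemma kbonacci_eq_0:
  fixes d :: "int \<Rightarrow> 'a::ab_group_add"
  assumes "k \<ge> 1" and rec: "kbonacci k d" and init: "\<And>r. r < k \<Longrightarrow> d (int r) = 0"
  shows "d x = 0"
proof -
  obtain k' where k: "k = Suc k'" using \<open>k \<ge> 1\<close> by (cases k) auto
  have "\<forall>i<k. d (m + int i) = 0" for m
  proof (induction m rule: int_induct[where k = 0])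
    case base
    then show ?case using init by simp
  next
    case (step1 m)
    have "d (m + 1 + int i) = 0" if "i < k" for i
    proof (cases "Suc i < k")
      case True
      then have "d (m + int (Suc i)) = 0" using step1 by blast
      then show ?thesis by (simp add: ac_simps)
    next
      case False
      then have "int k = int i + 1" using that by simp
      then have "d (m + 1 + int i) = d (m + int k)" by (simp add: ac_simps)
      also have "\<dots> = (\<Sum>i<k. d (m + int i))" using rec unfolding kbonacci_def by blast
      finally show ?thesis using step1 by simp
    qed
    then show ?case by blast
  next
    case (step2 m)
    have "d (m - 1 + int k) = (\<Sum>i<k. d (m - 1 + int i))" using rec unfolding kbonacci_def by blast
    also have "\<dots> = d (m - 1) + (\<Sum>i<k'. d (m + int i))"
      unfolding k sum.lessThan_Suc_shift by simp
    finally have "d (m - 1) = 0" using step2 k by simp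
    show ?case
    proof (intro allI impI)
      fix i assume "i < k"
      then show "d (m - 1 + int i) = 0"
        using \<open>d (m - 1) = 0\<close> step2 k by (cases i) simp_all
    qed
  qed
  then have "d (x + int 0) = 0" using k by blast
  then show ?thesis by simp
qed

text \<open>The guard \<open>k = 0\<close> only serves termination.\<close>

function kbonacci_extend :: "nat \<Rightarrow> (nat \<Rightarrow> 'a::ab_group_add) \<Rightarrow> int \<Rightarrow> 'a" where
  "kbonacci_extend k c x =
    (if k = 0 \<or> (0 \<le> x \<and> x < int k) then c (nat x)
     else if x \<ge> int k then (\<Sum>i<k. kbonacci_extend k c (x - int k + int i))
     else kbonacci_extend k c (x + int k) - (\<Sum>i\<in>{1..<k}. kbonacci_extend k c (x + int i)))"
  by auto
termination
  by (relation "measure (\<lambda>(k, c, x). if 0 \<le> x \<and> x < int k then 0 else nat \<bar>x\<bar> + k)") auto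

declare kbonacci_extend.simps [simp del]

lemma kbonacci_kbonacci_extend:
  assumes "k \<ge> 1"
  shows "kbonacci k (kbonacci_extend k c)"
  unfolding kbonacci_def
proof
  fix n
  let ?f = "kbonacci_extend k c"
  show "?f (n + int k) = (\<Sum>i<k. ?f (n + int i))"
  proof (cases "n \<ge> 0")
    case True
    then show ?thesis using assms by (subst kbonacci_extend.simps) simp
  next
    case False
    have "(\<Sum>i<k. ?f (n + int i)) = ?f n + (\<Sum>i\<in>{1..<k}. ?f (n + int i))"
      using assms by (simp add: lessThan_atLeast0 sum.atLeast_Suc_lessThan)
    also have "?f n = ?f (n + int k) - (\<Sum>i\<in>{1..<k}. ?f (n + int i))"
      using False assms by (subst kbonacci_extend.simps) simp
    finally show ?thesis by simp
  qed
qed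

lemma kbonacci_extend_initial:
  "r < k \<Longrightarrow> kbonacci_extend k c (int r) = c r"
  by (subst kbonacci_extend.simps) simp

lemma kbonacci_ex1:
  fixes c :: "nat \<Rightarrow> 'a::ab_group_add"
  assumes "k \<ge> 1"
  shows "\<exists>!f. kbonacci k f \<and> (\<forall>r<k. f (int r) = c r)"
proof (rule ex1I)
  show "kbonacci k (kbonacci_extend k c) \<and> (\<forall>r<k. kbonacci_extend k c (int r) = c r)"
    using assms by (simp add: kbonacci_kbonacci_extend kbonacci_extend_initial)
next
  fix g assume g: "kbonacci k g \<and> (\<forall>r<k. g (int r) = c r)"
  have "kbonacci k (\<lambda>x. g x - kbonacci_extend k c x)"
    using g kbonacci_kbonacci_extend[OF assms] by (blast intro: kbonacci_diff)
  then have "g x - kbonacci_extend k c x = 0" for x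
    by (rule kbonacci_eq_0[OF assms]) (simp add: g kbonacci_extend_initial)
  then show "g = kbonacci_extend k c" by auto
qed

lemma kbonacci_lucas:
  assumes "k \<ge> 1"
  shows "kbonacci k (lucas k)"
  using theI'[OF kbonacci_ex1[OF assms, of "\<lambda>r. mtrace (Qk k ^\<^sub>m r)"]]
  unfolding lucas_def kbonacci_def by blast

lemma Qk_carrier: "Qk k \<in> carrier_mat k k"
  by (simp add: Qk_def)

lemma index_mult_Qk:
  assumes "M \<in> carrier_mat k k" and "i < k" and "j < k"
  shows "(M * Qk k) $$ (i, j) = M $$ (i, 0) + (if Suc j < k then M $$ (i, Suc j) else 0)"
proof -
  have "(M * Qk k) $$ (i, j) = (\<Sum>r<k. M $$ (i, r) * Qk k $$ (r, j))"
    using assms by (simp add: scalar_prod_def lessThan_atLeast0 Qk_def)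
  also have "\<dots> = (\<Sum>r<k. (if r = 0 then M $$ (i, r) else 0) + (if r = Suc j then M $$ (i, r) else 0))"
    using assms by (intro sum.cong) (auto simp: Qk_def)
  also have "\<dots> = M $$ (i, 0) + (if Suc j < k then M $$ (i, Suc j) else 0)"
    using assms by (simp add: sum.distrib)
  finally show ?thesis .
qed

lemma index_Qk_mult:
  assumes "M \<in> carrier_mat k k" and "i < k" and "j < k"
  shows "(Qk k * M) $$ (i, j) = (if i = 0 then (\<Sum>r<k. M $$ (r, j)) else M $$ (i - 1, j))"
proof -
  have "(Qk k * M) $$ (i, j) = (\<Sum>r<k. Qk k $$ (i, r) * M $$ (r, j))"
    using assms by (simp add: scalar_prod_def lessThan_atLeast0 Qk_def)
  also have "\<dots> = (if i = 0 then (\<Sum>r<k. M $$ (r, j)) else M $$ (i - 1, j))"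
  proof (cases "i = 0")
    case True
    then show ?thesis using assms by (simp add: Qk_def)
  next
    case False
    have "(\<Sum>r<k. Qk k $$ (i, r) * M $$ (r, j)) = (\<Sum>r<k. if r = i - 1 then M $$ (r, j) else 0)"
      using False assms by (intro sum.cong) (auto simp: Qk_def)
    then show ?thesis using False assms by simp
  qed
  finally show ?thesis .
qed

lemma dim_lucas_mat [simp]: "dim_row (lucas_mat k n) = k" "dim_col (lucas_mat k n) = k"
  by (simp_all add: lucas_mat_def)

lemma lucas_mat_carrier: "lucas_mat k n \<in> carrier_mat k k"
  by (simp add: carrier_matI)

text \<open>Column \<open>j\<close> of \<open>L_k^(n)\<close> as a function of \<open>n - i\<close>. For \<open>j \<ge> 1\<close> this is the paper's sum of
  \<open>l_{k,m}\<close>; for \<open>j = 0\<close> the recurrence turns the single entry \<open>l_{k,k+n-i-1}\<close> into the same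
  shape (\<open>lucas_col_0\<close>).\<close>

definition lucas_col :: "nat \<Rightarrow> nat \<Rightarrow> int \<Rightarrow> rat" where
  "lucas_col k j t = (\<Sum>d\<in>{j..<k}. lucas k (t + int d - 1))"

lemma kbonacci_lucas_col:
  assumes "k \<ge> 1"
  shows "kbonacci k (lucas_col k j)"
proof -
  have "kbonacci k (\<lambda>t. \<Sum>d\<in>{j..<k}. lucas k (t + (int d - 1)))"
    using kbonacci_lucas[OF assms] by (intro kbonacci_sum kbonacci_shift)
  then show ?thesis unfolding lucas_col_def by (simp add: algebra_simps)
qed

lemma lucas_col_0:
  assumes "k \<ge> 1"
  shows "lucas_col k 0 t = lucas k (t + int k - 1)"
proof -
  have "lucas k (t - 1 + int k) = (\<Sum>d<k. lucas k (t - 1 + int d))"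
    using kbonacci_lucas[OF assms] unfolding kbonacci_def by blast
  then show ?thesis by (simp add: lucas_col_def atLeast0LessThan algebra_simps)
qed

lemma lucas_col_Suc:
  assumes "j < k"
  shows "lucas_col k j (t + 1) = lucas_col k 0 t + lucas_col k (Suc j) t"
proof -
  have "lucas_col k j (t + 1) = (\<Sum>d\<in>{Suc j..<Suc k}. lucas k (t + int d - 1))"
    unfolding lucas_col_def sum.shift_bounds_Suc_ivl by (simp add: algebra_simps)
  also have "\<dots> = lucas_col k (Suc j) t + lucas k (t + int k - 1)"
    using assms by (simp add: lucas_col_def)
  also have "lucas k (t + int k - 1) = lucas_col k 0 t"
    using assms by (simp add: lucas_col_0)
  finally show ?thesis by simp
qed

lemma lucas_mat_eq: "lucas_mat k n = mat k k (\<lambda>(i, j). lucas_col k j (n - int i))"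
proof (rule eq_matI)
  fix i j assume "i < dim_row (mat k k (\<lambda>(i, j). lucas_col k j (n - int i)))"
    and "j < dim_col (mat k k (\<lambda>(i, j). lucas_col k j (n - int i)))"
  then have i: "i < k" and j: "j < k" by simp_all
  show "lucas_mat k n $$ (i, j) = mat k k (\<lambda>(i, j). lucas_col k j (n - int i)) $$ (i, j)"
  proof (cases "j = 0")
    case True
    then show ?thesis using i j by (simp add: lucas_mat_def lucas_col_0 algebra_simps)
  next
    case False
    let ?shift = "\<lambda>d. n - int i + int d - 1"
    have "{n - int i + int j - 1 .. n - int i + int k - 2} = ?shift ` {j..<k}"
    proof (intro equalityI subsetI)
      fix m assume "m \<in> {n - int i + int j - 1 .. n - int i + int k - 2}"
      then have "m = ?shift (nat (m - n + int i + 1))" and "nat (m - n + int i + 1) \<in> {j..<k}"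
        by auto
      then show "m \<in> ?shift ` {j..<k}" by blast
    qed auto
    moreover have "inj_on ?shift {j..<k}" by (auto simp: inj_on_def)
    ultimately have "(\<Sum>m\<in>{n - int i + int j - 1 .. n - int i + int k - 2}. lucas k m) = lucas_col k j (n - int i)"
      by (simp add: sum.reindex lucas_col_def)
    then show ?thesis using False i j by (simp add: lucas_mat_def Let_def algebra_simps)
  qed
qed simp_all

lemma lucas_mat_mult_Qk: "lucas_mat k n * Qk k = lucas_mat k (n + 1)"
proof (rule eq_matI)
  fix i j assume "i < dim_row (lucas_mat k (n + 1))" and "j < dim_col (lucas_mat k (n + 1))"
  then have i: "i < k" and j: "j < k" by simp_all
  have "(lucas_mat k n * Qk k) $$ (i, j) =
      lucas_mat k n $$ (i, 0) + (if Suc j < k then lucas_mat k n $$ (i, Suc j) else 0)"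
    by (rule index_mult_Qk[OF lucas_mat_carrier i j])
  also have "\<dots> =
      lucas_col k 0 (n - int i) + (if Suc j < k then lucas_col k (Suc j) (n - int i) else 0)"
    using i j by (simp add: lucas_mat_eq)
  also have "\<dots> = lucas_col k 0 (n - int i) + lucas_col k (Suc j) (n - int i)"
    using j by (simp add: lucas_col_def)
  also have "\<dots> = lucas_col k j (n - int i + 1)"
    using j by (simp add: lucas_col_Suc)
  finally show "(lucas_mat k n * Qk k) $$ (i, j) = lucas_mat k (n + 1) $$ (i, j)"
    using i j by (simp add: lucas_mat_eq algebra_simps)
qed (simp_all add: Qk_def)

lemma Qk_mult_lucas_mat: "Qk k * lucas_mat k n = lucas_mat k (n + 1)"
proof (rule eq_matI)
  fix i j assume "i < dim_row (lucas_mat k (n + 1))" and "j < dim_col (lucas_mat k (n + 1))"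
  then have i: "i < k" and j: "j < k" by simp_all
  have "(Qk k * lucas_mat k n) $$ (i, j) =
      (if i = 0 then (\<Sum>r<k. lucas_mat k n $$ (r, j)) else lucas_mat k n $$ (i - 1, j))"
    by (rule index_Qk_mult[OF lucas_mat_carrier i j])
  also have "\<dots> = lucas_col k j (n + 1 - int i)"
  proof (cases "i = 0")
    case True
    have "kbonacci k (lucas_col k j)" using i by (simp add: kbonacci_lucas_col)
    then show ?thesis
      using True j by (simp add: lucas_mat_eq kbonacci_succ_eq_sum_prev)
  next
    case False
    then show ?thesis
      using i j by (simp add: lucas_mat_eq of_nat_diff algebra_simps)
  qed
  finally have "(Qk k * lucas_mat k n) $$ (i, j) = lucas_col k j (n + 1 - int i)" .
  then show "(Qk k * lucas_mat k n) $$ (i, j) = lucas_mat k (n + 1) $$ (i, j)"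
    using i j by (simp add: lucas_mat_eq)
qed (simp_all add: Qk_def)

lemma lucas_mat_mult_shift:
  "lucas_mat k (a + 1) * lucas_mat k b = lucas_mat k a * lucas_mat k (b + 1)"
proof -
  have "lucas_mat k (a + 1) * lucas_mat k b = lucas_mat k a * Qk k * lucas_mat k b"
    by (simp add: lucas_mat_mult_Qk)
  also have "\<dots> = lucas_mat k a * (Qk k * lucas_mat k b)"
    by (rule assoc_mult_mat[OF lucas_mat_carrier Qk_carrier lucas_mat_carrier])
  finally show ?thesis by (simp add: Qk_mult_lucas_mat)
qed

lemma lucas_mat_mult: "lucas_mat k a * lucas_mat k b = lucas_mat k 0 * lucas_mat k (a + b)"
proof (induction a arbitrary: b rule: int_induct[where k = 0])
  case base
  then show ?case by simp
next
  case (step1 a)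
  have "lucas_mat k (a + 1) * lucas_mat k b = lucas_mat k a * lucas_mat k (b + 1)"
    by (rule lucas_mat_mult_shift)
  also have "\<dots> = lucas_mat k 0 * lucas_mat k (a + 1 + b)"
    using step1 by (simp add: ac_simps)
  finally show ?case .
next
  case (step2 a)
  have "lucas_mat k (a - 1) * lucas_mat k b = lucas_mat k (a - 1 + 1) * lucas_mat k (b - 1)"
    using lucas_mat_mult_shift[of k "a - 1" "b - 1"] by simp
  then show ?case using step2 by (simp add: algebra_simps)
qed

lemma inverts_mat_carrier:
  assumes "H \<in> carrier_mat n n" and "inverts_mat H Hi" and "inverts_mat Hi H"
  shows "Hi \<in> carrier_mat n n"
proof -
  have "dim_col Hi = n"
    using arg_cong[OF assms(2)[unfolded inverts_mat_def], of dim_col] assms(1) by simp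
  moreover have "dim_row Hi = n"
    using arg_cong[OF assms(3)[unfolded inverts_mat_def], of dim_col] assms(1) by simp
  ultimately show ?thesis by auto
qed

lemma inverts_mat_of_mult_eq_1:
  fixes A :: "'a::field mat"
  assumes A: "A \<in> carrier_mat n n" and B: "B \<in> carrier_mat n n" and Hi: "Hi \<in> carrier_mat n n"
    and AB: "(A * B) * Hi = 1\<^sub>m n"
  shows "inverts_mat A (B * Hi) \<and> inverts_mat (B * Hi) A"
proof -
  have right: "A * (B * Hi) = 1\<^sub>m n" using AB by (simp add: assoc_mult_mat[OF A B Hi])
  moreover have "B * Hi * A = 1\<^sub>m n"
    using mat_mult_left_right_inverse[OF A _ right] B Hi by simp
  ultimately show ?thesis using A B by (simp add: inverts_mat_def)
qed

theorem theorem7: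
  fixes k :: nat and n :: int
  assumes "k \<ge> 2"
    and "invertible_mat (lucas_mat k 0 * lucas_mat k 0)"
  shows "invertible_mat (lucas_mat k n) \<and>
    (\<forall>Hi \<in> carrier_mat k k.
       inverts_mat (lucas_mat k 0 * lucas_mat k 0) Hi \<and> inverts_mat Hi (lucas_mat k 0 * lucas_mat k 0)
       \<longrightarrow> inverts_mat (lucas_mat k n) (lucas_mat k (- n) * Hi) \<and>
           inverts_mat (lucas_mat k (- n) * Hi) (lucas_mat k n))"
proof -
  let ?H = "lucas_mat k 0 * lucas_mat k 0"
  have H: "?H \<in> carrier_mat k k" by (rule mult_carrier_mat[OF lucas_mat_carrier lucas_mat_carrier])
  have LH: "lucas_mat k n * lucas_mat k (- n) = ?H"
    using lucas_mat_mult[of k n "- n"] by simp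
  have inverse: "inverts_mat (lucas_mat k n) (lucas_mat k (- n) * Hi) \<and>
      inverts_mat (lucas_mat k (- n) * Hi) (lucas_mat k n)"
    if "Hi \<in> carrier_mat k k" and "inverts_mat ?H Hi" for Hi
  proof (rule inverts_mat_of_mult_eq_1[OF lucas_mat_carrier lucas_mat_carrier that(1)])
    show "lucas_mat k n * lucas_mat k (- n) * Hi = 1\<^sub>m k"
      using that(2) H unfolding LH inverts_mat_def by simp
  qed
  obtain Hi where Hi: "inverts_mat ?H Hi" "inverts_mat Hi ?H"
    using assms(2) unfolding invertible_mat_def by blast
  have "Hi \<in> carrier_mat k k" by (rule inverts_mat_carrier[OF H Hi])
  then have "invertible_mat (lucas_mat k n)"
    using inverse[OF _ Hi(1)] unfolding invertible_mat_def square_mat.simps by auto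
  with inverse show ?thesis by blast
qed

end
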